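(* Every finite group with the Magnus Property is solvable.
   Context: For a group $G$ and $x\in G$, $x^G$ denotes the conjugacy class of $x$ and $\langle x^G\rangle$ the normal closure of $x$ in $G$. A group $G$ has the Magnus Property (MP) if whenever $x,y\in G$ satisfy $\langle x^G\rangle=\langle y^G\rangle$, then $x$ is conjugate in $G$ to $y$ or to $y^{-1}$. *)

theory Defs
  imports "HOL-Algebra.Solvable_Groups" "HOL-Algebra.Generated_Groups"
begin

definition conj_class :: "('a, 'b) monoid_scheme \<Rightarrow> 'a \<Rightarrow> 'a set" where
  "conj_class G x = {g \<otimes>\<^bsub>G\<^esub> x \<otimes>\<^bsub>G\<^esub> inv\<^bsub>G\<^esub> g | g. g \<in> carrier G}"

definition normal_closure :: "('a, 'b) monoid_scheme \<Rightarrow> 'a \<Rightarrow> 'a set" where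
  "normal_closure G x = generate G (conj_class G x)"

definition conjugate :: "('a, 'b) monoid_scheme \<Rightarrow> 'a \<Rightarrow> 'a \<Rightarrow> bool" where
  "conjugate G x y \<longleftrightarrow> (\<exists>g \<in> carrier G. x = g \<otimes>\<^bsub>G\<^esub> y \<otimes>\<^bsub>G\<^esub> inv\<^bsub>G\<^esub> g)"

definition magnus_property :: "('a, 'b) monoid_scheme \<Rightarrow> bool" where
  "magnus_property G \<longleftrightarrow>
     (\<forall>x \<in> carrier G. \<forall>y \<in> carrier G.
        normal_closure G x = normal_closure G y \<longrightarrow>
        conjugate G x y \<or> conjugate G x (inv\<^bsub>G\<^esub> y))"

end

(*
  Suppose G is finite with the Magnus Property but not solvable. Its derived series
  stabilises at a nontrivial perfect normal subgroup D. Choose L normal in G maximal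
  among those properly contained in D, and x in D - L whose normal closure K is minimal
  among the normal closures of elements of D - L. For k in K - L the normal closure of k
  lies in K, hence equals K, so by the Magnus Property k is conjugate to x or x^-1;
  maximality of L gives K L = D. Hence in G/L every nontrivial element of the image N of D
  is conjugate to the image of x or of x^-1.

  Such an N is abelian: its nontrivial elements all have the order of x, which is therefore
  a prime p (a proper power of x would be nontrivial of smaller order), so N is a p-group
  (Cauchy) and has a nontrivial central element (class equation); being conjugate to x or
  x^-1, this element makes x, and then every element of N, central in N. This contradicts
  N being perfect and nontrivial.
*)
theory Submission
  imports Defs "HOL-Algebra.Multiplicative_Group" "HOL-Algebra.Sylow" "HOL-Algebra.Zassenhaus"
    "HOL-Computational_Algebra.Primes"
begin

context group
begin

lemma conj_class_subset_carrier:
  "x \<in> carrier G \<Longrightarrow> conj_class G x \<subseteq> carrier G"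
  unfolding conj_class_def by auto

lemma mem_conj_class:
  assumes "x \<in> carrier G"
  shows "x \<in> conj_class G x"
proof -
  have "x = \<one> \<otimes> x \<otimes> inv \<one>"
    using assms by simp
  then show ?thesis
    unfolding conj_class_def by blast
qed

lemma conj_class_one: "conj_class G \<one> = {\<one>}"
  using mem_conj_class[OF one_closed] unfolding conj_class_def by auto

lemma normal_closure_normal:
  assumes "x \<in> carrier G"
  shows "normal_closure G x \<lhd> G"
  unfolding normal_closure_def
proof (rule normal_generateI[OF conj_class_subset_carrier[OF assms]])
  fix h g assume "h \<in> conj_class G x" and g: "g \<in> carrier G"
  then obtain a where a: "a \<in> carrier G" "h = a \<otimes> x \<otimes> inv a"
    unfolding conj_class_def by auto
  then have "g \<otimes> h \<otimes> inv g = (g \<otimes> a) \<otimes> x \<otimes> inv (g \<otimes> a)"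
    using g assms by (simp add: m_assoc inv_mult_group)
  then show "g \<otimes> h \<otimes> inv g \<in> conj_class G x"
    unfolding conj_class_def using a g by blast
qed

lemma mem_normal_closure:
  assumes "x \<in> carrier G"
  shows "x \<in> normal_closure G x"
  unfolding normal_closure_def by (rule generate.incl[OF mem_conj_class[OF assms]])

lemma normal_closure_minimal:
  assumes "N \<lhd> G" and "x \<in> N"
  shows "normal_closure G x \<subseteq> N"
  unfolding normal_closure_def
proof (rule generate_subgroup_incl)
  interpret N: normal N G by fact
  show "subgroup N G" by (rule N.subgroup_axioms)
  show "conj_class G x \<subseteq> N"
    unfolding conj_class_def using N.inv_op_closed2 assms(2) by auto
qed

lemma nat_pow_conjugate:
  assumes "g \<in> carrier G" "x \<in> carrier G"
  shows "(g \<otimes> x \<otimes> inv g) [^] (n::nat) = g \<otimes> x [^] n \<otimes> inv g"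
proof (induction n)
  case 0
  then show ?case using assms by simp
next
  case (Suc n)
  then have "(g \<otimes> x \<otimes> inv g) [^] Suc n = (g \<otimes> x [^] n \<otimes> inv g) \<otimes> (g \<otimes> x \<otimes> inv g)"
    by simp
  also have "\<dots> = g \<otimes> (x [^] n \<otimes> x) \<otimes> inv g"
    using assms by (simp add: m_assoc[symmetric]) (simp add: m_assoc)
  finally show ?case
    by simp
qed

lemma ord_conjugate:
  assumes "conjugate G y x" and "x \<in> carrier G"
  shows "ord y = ord x"
proof -
  obtain g where g: "g \<in> carrier G" and y: "y = g \<otimes> x \<otimes> inv g"
    using assms(1) unfolding conjugate_def by blast
  have "y [^] n = \<one> \<longleftrightarrow> x [^] n = \<one>" for n :: nat
    using conjugation_is_inj[OF g _ one_closed] g assms(2)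
    by (auto simp: y nat_pow_conjugate)
  then show ?thesis
    using assms(2) g y by (simp add: ord_unique pow_eq_id)
qed

lemma prime_ord_if_nontrivial_powers_same_ord:
  assumes "finite (carrier G)" and x: "x \<in> carrier G" "x \<noteq> \<one>"
    and powers: "\<And>k::nat. x [^] k \<noteq> \<one> \<Longrightarrow> ord (x [^] k) = ord x"
  shows "prime (ord x)"
proof -
  have "ord x > 1"
    using ord_ge_1[OF assms(1) x(1)] ord_eq_1[OF x(1)] x(2) by linarith
  moreover have "d = 1 \<or> d = ord x" if d: "d dvd ord x" for d
  proof (rule ccontr)
    assume nontrivial: "\<not> (d = 1 \<or> d = ord x)"
    have "d \<noteq> 0"
      using d \<open>ord x > 1\<close> by (intro notI) simp
    then have "ord x div d < ord x"
      using nontrivial \<open>ord x > 1\<close> by (intro div_less_dividend) auto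
    moreover have "x [^] d \<noteq> \<one>"
      using pow_eq_id[OF x(1)] d nontrivial dvd_antisym by blast
    ultimately show False
      using powers ord_pow[OF x(1) d \<open>d \<noteq> 0\<close>] by simp
  qed
  ultimately show ?thesis
    using prime_nat_iff by blast
qed

lemma conjugate_sym:
  assumes "conjugate G y x" and "x \<in> carrier G"
  shows "conjugate G x y"
proof -
  obtain g where g: "g \<in> carrier G" and y: "y = g \<otimes> x \<otimes> inv g"
    using assms(1) unfolding conjugate_def by blast
  have "x = inv g \<otimes> y \<otimes> inv (inv g)"
    using g assms(2) by (simp add: y m_assoc[symmetric]) (simp add: m_assoc)
  then show ?thesis
    unfolding conjugate_def using g by blast
qed

lemma inv_commute:
  assumes "x \<in> carrier G" "y \<in> carrier G" and "x \<otimes> y = y \<otimes> x"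
  shows "inv x \<otimes> y = y \<otimes> inv x"
proof -
  have "inv x \<otimes> y = inv x \<otimes> (y \<otimes> x) \<otimes> inv x"
    using assms(1,2) by (simp add: m_assoc)
  also have "\<dots> = inv x \<otimes> (x \<otimes> y) \<otimes> inv x"
    using assms(3) by simp
  also have "\<dots> = y \<otimes> inv x"
    using assms(1,2) by (simp add: m_assoc[symmetric])
  finally show ?thesis .
qed

lemma conjugate_commutes_with_normal:
  assumes "N \<lhd> G" and "conjugate G y x" and "x \<in> carrier G"
    and x: "\<forall>n\<in>N. x \<otimes> n = n \<otimes> x"
  shows "\<forall>n\<in>N. y \<otimes> n = n \<otimes> y"
proof
  interpret N: normal N G by fact
  obtain g where g: "g \<in> carrier G" and y: "y = g \<otimes> x \<otimes> inv g"
    using assms(2) unfolding conjugate_def by blast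
  fix n assume n: "n \<in> N"
  then have nG: "n \<in> carrier G"
    using N.subset by blast
  have "y \<otimes> n = g \<otimes> (x \<otimes> (inv g \<otimes> n \<otimes> g)) \<otimes> inv g"
    using g nG assms(3) by (simp add: y m_assoc)
  also have "\<dots> = g \<otimes> ((inv g \<otimes> n \<otimes> g) \<otimes> x) \<otimes> inv g"
    using x N.inv_op_closed1[OF g n] by simp
  also have "\<dots> = n \<otimes> y"
    using g nG assms(3) by (simp add: y m_assoc[symmetric])
  finally show "y \<otimes> n = n \<otimes> y" .
qed

lemma exists_ord_eq_prime:
  assumes "finite (carrier G)" and q: "prime q" "q dvd order G"
  obtains g where "g \<in> carrier G" and "ord g = q"
proof -
  have order_eq: "order G = q ^ 1 * (order G div q)"
    using q(2) by simp
  obtain S where S: "subgroup S G" "card S = q"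
    using sylow_thm[OF q(1) is_group order_eq assms(1)] by auto
  interpret S: group "G\<lparr>carrier := S\<rparr>"
    using subgroup_imp_group[OF S(1)] .
  have "S \<noteq> {\<one>}"
    using S(2) prime_gt_1_nat[OF q(1)] by auto
  then obtain s where s: "s \<in> S" "s \<noteq> \<one>"
    using subgroup.one_closed[OF S(1)] by blast
  have sG: "s \<in> carrier G"
    using s(1) subgroup.subset[OF S(1)] by blast
  have "s [^] q = \<one>"
    using S.pow_order_eq_1[of s] s(1) S(2) by (simp add: order_def flip: nat_pow_consistent)
  then have "ord s dvd q"
    using pow_eq_id[OF sG] by blast
  moreover have "ord s \<noteq> 1"
    using ord_eq_1[OF sG] s(2) by blast
  ultimately have "ord s = q"
    using q(1) prime_nat_iff by blast
  then show ?thesis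
    using that sG by blast
qed

lemma prime_power_order_if_exponent_prime:
  assumes "finite (carrier G)" and p: "prime p" and exp: "\<forall>g\<in>carrier G. g [^] p = \<one>"
  shows "\<exists>n. order G = p ^ n"
proof (rule ccontr)
  assume "\<nexists>n. order G = p ^ n"
  then obtain q where q: "q \<in> prime_factors (order G)" "q \<noteq> p"
    using Ex_other_prime_factor[where n = "order G" and p = p] p assms(1) order_gt_0_iff_finite by auto
  then have "prime q" "q dvd order G"
    by auto
  then obtain g where g: "g \<in> carrier G" "ord g = q"
    using exists_ord_eq_prime assms(1) by metis
  then have "q dvd p"
    using exp pow_eq_id by blast
  then show False
    using primes_dvd_imp_eq[OF \<open>prime q\<close> p] q(2) by blast
qed

lemma orbit_conjugation:
  assumes "y \<in> carrier G"
  shows "orbit G (\<lambda>g. \<lambda>h\<in>carrier G. g \<otimes> h \<otimes> inv g) y = conj_class G y"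
  using assms unfolding orbit_def conj_class_def by simp

lemma card_conj_class_eq_1_iff:
  assumes "y \<in> carrier G"
  shows "card (conj_class G y) = 1 \<longleftrightarrow> (\<forall>g\<in>carrier G. y \<otimes> g = g \<otimes> y)"
proof
  assume "card (conj_class G y) = 1"
  then have singleton: "conj_class G y = {y}"
    using mem_conj_class[OF assms] by (auto simp: card_1_singleton_iff)
  show "\<forall>g\<in>carrier G. y \<otimes> g = g \<otimes> y"
  proof
    fix g assume g: "g \<in> carrier G"
    have "g \<otimes> y \<otimes> inv g = y"
      using singleton g unfolding conj_class_def by blast
    then have "y \<otimes> g = g \<otimes> y \<otimes> inv g \<otimes> g"
      by simp
    also have "\<dots> = g \<otimes> y"
      using g assms by (simp add: m_assoc)
    finally show "y \<otimes> g = g \<otimes> y" .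
  qed
next
  assume commute: "\<forall>g\<in>carrier G. y \<otimes> g = g \<otimes> y"
  have "g \<otimes> y \<otimes> inv g = y" if g: "g \<in> carrier G" for g
  proof -
    have "g \<otimes> y \<otimes> inv g = y \<otimes> g \<otimes> inv g"
      using commute g by simp
    also have "\<dots> = y"
      using g assms by (simp add: m_assoc)
    finally show ?thesis .
  qed
  then have "conj_class G y = {y}"
    using mem_conj_class[OF assms] unfolding conj_class_def by auto
  then show "card (conj_class G y) = 1"
    by simp
qed

lemma card_conj_class_dvd_order:
  assumes "finite (carrier G)" and "y \<in> carrier G"
  shows "card (conj_class G y) dvd order G"
proof -
  interpret conjugation: group_action G "carrier G" "\<lambda>g. \<lambda>h\<in>carrier G. g \<otimes> h \<otimes> inv g"
    by (rule action_by_conjugation)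
  have "card (conj_class G y) * card (stabilizer G (\<lambda>g. \<lambda>h\<in>carrier G. g \<otimes> h \<otimes> inv g) y) = order G"
    using conjugation.orbit_stabilizer_theorem[OF assms(2)] orbit_conjugation[OF assms(2)] by simp
  then show ?thesis
    by (rule dvdI[OF sym])
qed

lemma class_equation:
  assumes "finite (carrier G)"
  shows "(\<Sum>C\<in>{conj_class G y | y. y \<in> carrier G}. card C) = order G"
proof -
  interpret conjugation: group_action G "carrier G" "\<lambda>g. \<lambda>h\<in>carrier G. g \<otimes> h \<otimes> inv g"
    by (rule action_by_conjugation)
  have orbits: "orbits G (carrier G) (\<lambda>g. \<lambda>h\<in>carrier G. g \<otimes> h \<otimes> inv g) = {conj_class G y | y. y \<in> carrier G}"
    unfolding orbits_def using orbit_conjugation by auto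
  have "(\<Sum>C\<in>{conj_class G y | y. y \<in> carrier G}. card C) = (\<Sum>C\<in>{conj_class G y | y. y \<in> carrier G}. \<Sum>x\<in>C. 1::nat)"
    by simp
  also have "\<dots> = (\<Sum>x\<in>carrier G. 1)"
    unfolding orbits[symmetric] by (rule conjugation.disjoint_sum[OF assms])
  finally show ?thesis
    by (simp add: order_def)
qed

lemma exists_central_if_prime_power_order:
  assumes fin: "finite (carrier G)" and p: "prime p" and "order G = p ^ n" and "n > 0"
  shows "\<exists>z\<in>carrier G. z \<noteq> \<one> \<and> (\<forall>g\<in>carrier G. z \<otimes> g = g \<otimes> z)"
proof (rule ccontr)
  assume no_center: "\<not> ?thesis"
  define conj_classes where "conj_classes = {conj_class G y | y. y \<in> carrier G}"
  have "conj_classes \<subseteq> Pow (carrier G)"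
    using conj_class_subset_carrier unfolding conj_classes_def by blast
  then have finite_conj_classes: "finite conj_classes"
    using fin finite_subset by blast
  have one_conj_class: "{\<one>} \<in> conj_classes"
    unfolding conj_classes_def using conj_class_one by force
  have "p dvd card C" if C: "C \<in> conj_classes - {{\<one>}}" for C
  proof -
    obtain y where y: "y \<in> carrier G" "C = conj_class G y"
      using C unfolding conj_classes_def by blast
    then have "y \<noteq> \<one>"
      using C conj_class_one by auto
    then have "card C \<noteq> 1"
      using no_center y card_conj_class_eq_1_iff by blast
    have "card C dvd p ^ n"
      using card_conj_class_dvd_order[OF fin y(1)] y(2) assms(3) by simp
    then obtain i where i: "card C = p ^ i"
      using divides_primepow_nat[OF p] by blast
    with \<open>card C \<noteq> 1\<close> show ?thesis
      by (cases i) auto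
  qed
  then have "p dvd (\<Sum>C\<in>conj_classes - {{\<one>}}. card C)"
    by (rule dvd_sum)
  moreover have "order G = 1 + (\<Sum>C\<in>conj_classes - {{\<one>}}. card C)"
    using class_equation[OF fin] sum.remove[OF finite_conj_classes one_conj_class, of card]
    unfolding conj_classes_def by simp
  moreover have "p dvd order G"
    using assms(3,4) by simp
  ultimately have "p dvd 1"
    using dvd_add_left_iff by metis
  then show False
    using p by simp
qed

lemma commute_if_nontrivial_elements_conjugate:
  assumes fin: "finite (carrier G)" and N: "N \<lhd> G" and x: "x \<in> N"
    and cover: "\<forall>y\<in>N. y \<noteq> \<one> \<longrightarrow> conjugate G y x \<or> conjugate G y (inv x)"
  shows "\<forall>a\<in>N. \<forall>b\<in>N. a \<otimes> b = b \<otimes> a"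
proof -
  interpret N: normal N G by fact
  have xG: "x \<in> carrier G"
    using x N.subset by blast
  have inv_central: "\<forall>n\<in>N. inv a \<otimes> n = n \<otimes> inv a"
    if "a \<in> carrier G" and "\<forall>n\<in>N. a \<otimes> n = n \<otimes> a" for a
    using inv_commute[OF that(1)] that(2) N.subset by blast
  have spread: "\<forall>y\<in>N. \<forall>n\<in>N. y \<otimes> n = n \<otimes> y" if x_central: "\<forall>n\<in>N. x \<otimes> n = n \<otimes> x"
  proof
    fix y assume y: "y \<in> N"
    show "\<forall>n\<in>N. y \<otimes> n = n \<otimes> y"
    proof (cases "y = \<one>")
      case True
      then show ?thesis
        using N.subset by auto
    next
      case False
      then have "conjugate G y x \<or> conjugate G y (inv x)"
        using cover y by blast
      then show ?thesis
        using conjugate_commutes_with_normal[OF N _ xG x_central]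
          conjugate_commutes_with_normal[OF N _ inv_closed[OF xG] inv_central[OF xG x_central]]
        by blast
    qed
  qed
  have "\<forall>n\<in>N. x \<otimes> n = n \<otimes> x"
  proof (cases "x = \<one>")
    case True
    then show ?thesis
      using N.subset by auto
  next
    case False
    have same_ord: "ord y = ord x" if "y \<in> N" "y \<noteq> \<one>" for y
      using cover that ord_conjugate[OF _ xG] ord_conjugate[OF _ inv_closed[OF xG]] ord_inv[OF xG]
      by auto
    interpret H: group "G\<lparr>carrier := N\<rparr>"
      by (rule subgroup_imp_group[OF N.subgroup_axioms])
    have "x [^] k \<in> N" for k :: nat
      using H.nat_pow_closed[of x k] x by (simp flip: nat_pow_consistent)
    then have p: "prime (ord x)"
      using same_ord by (intro prime_ord_if_nontrivial_powers_same_ord[OF fin xG False]) blast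
    have fin_N: "finite (carrier (G\<lparr>carrier := N\<rparr>))"
      using fin N.subset finite_subset by auto
    have "y [^] ord x = \<one>" if "y \<in> N" for y
      using same_ord[OF that] pow_ord_eq_1[of y] N.subset that by (cases "y = \<one>") auto
    then have "\<forall>y\<in>carrier (G\<lparr>carrier := N\<rparr>). y [^]\<^bsub>G\<lparr>carrier := N\<rparr>\<^esub> ord x = \<one>\<^bsub>G\<lparr>carrier := N\<rparr>\<^esub>"
      by (simp flip: nat_pow_consistent)
    then obtain n where order_N: "order (G\<lparr>carrier := N\<rparr>) = ord x ^ n"
      using H.prime_power_order_if_exponent_prime[OF fin_N p] by blast
    have "n \<noteq> 0"
    proof
      assume "n = 0"
      then have "card N = 1"
        using order_N by (simp add: order_def)
      then show False
        using x False N.one_closed by (auto simp: card_1_singleton_iff)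
    qed
    then obtain z where z: "z \<in> N" "z \<noteq> \<one>" "\<forall>n\<in>N. z \<otimes> n = n \<otimes> z"
      using H.exists_central_if_prime_power_order[OF fin_N p order_N] by auto
    have zG: "z \<in> carrier G"
      using z(1) N.subset by blast
    have "conjugate G z x \<or> conjugate G z (inv x)"
      using cover z(1,2) by blast
    then have "conjugate G x z \<or> conjugate G (inv x) z"
      using conjugate_sym[OF _ xG] conjugate_sym[OF _ inv_closed[OF xG]] by blast
    then have "(\<forall>n\<in>N. x \<otimes> n = n \<otimes> x) \<or> (\<forall>n\<in>N. inv x \<otimes> n = n \<otimes> inv x)"
      using conjugate_commutes_with_normal[OF N _ zG z(3)] by blast
    then show ?thesis
      using inv_central[OF inv_closed[OF xG]] xG by auto
  qed
  then show ?thesis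
    using spread by blast
qed

lemma derived_eq_one_if_commute:
  assumes "subgroup N G" and "\<forall>a\<in>N. \<forall>b\<in>N. a \<otimes> b = b \<otimes> a"
  shows "derived G N = {\<one>}"
proof -
  interpret H: comm_group "G\<lparr>carrier := N\<rparr>"
    using assms by (intro group.group_comm_groupI subgroup_imp_group) auto
  show ?thesis
    using H.derived_eq_singleton[of N] derived_consistent[OF subset_refl assms(1)] by simp
qed

lemma exists_perfect_normal_subgroup_if_not_solvable:
  assumes fin: "finite (carrier G)" and "\<not> solvable G"
  obtains D where "D \<lhd> G" and "derived G D = D" and "D \<noteq> {\<one>}"
proof -
  define series where "series = range (\<lambda>n. (derived G ^^ n) (carrier G))"
  have normal: "(derived G ^^ n) (carrier G) \<lhd> G" for n
    by (induction n) (simp_all add: normal_self derived_is_normal)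
  have "series \<subseteq> Pow (carrier G)"
    using subgroup.subset[OF normal_imp_subgroup[OF normal]] unfolding series_def by blast
  then have "finite series"
    by (rule finite_subset) (simp add: fin)
  then obtain D where "D \<in> series" and minimal: "\<forall>M\<in>series. M \<subseteq> D \<longrightarrow> D = M"
    using finite_has_minimal[of series] unfolding series_def by blast
  then obtain n where D: "D = (derived G ^^ n) (carrier G)"
    unfolding series_def by blast
  have "derived G D = (derived G ^^ Suc n) (carrier G)"
    using D by simp
  then have "derived G D \<in> series"
    unfolding series_def by (rule range_eqI)
  moreover have "derived G D \<subseteq> D"
    using derived_incl[OF subset_refl normal_imp_subgroup[OF normal]] D by blast
  ultimately have "derived G D = D"
    using minimal by blast
  moreover have "D \<noteq> {\<one>}"
    using assms(2) solvable_iff_trivial_derived_seq D by blast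
  ultimately show ?thesis
    using that normal D by blast
qed

lemma normal_set_mult:
  assumes "K \<lhd> G" and "L \<lhd> G"
  shows "K <#> L \<lhd> G"
  unfolding normal_inv_iff
proof (intro conjI ballI)
  interpret K: normal K G by fact
  interpret L: normal L G by fact
  show "subgroup (K <#> L) G"
    by (rule mult_norm_subgroup[OF assms(1) L.subgroup_axioms])
  fix g a assume g: "g \<in> carrier G" and "a \<in> K <#> L"
  then obtain k l where kl: "k \<in> K" "l \<in> L" "a = k \<otimes> l"
    unfolding set_mult_def by blast
  have "k \<in> carrier G" "l \<in> carrier G"
    using kl(1,2) K.subset L.subset by auto
  then have "g \<otimes> a \<otimes> inv g = (g \<otimes> k \<otimes> inv g) \<otimes> (g \<otimes> l \<otimes> inv g)"
    using g kl(3) by (simp add: m_assoc) (simp add: m_assoc[symmetric])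
  moreover have "g \<otimes> k \<otimes> inv g \<in> K" and "g \<otimes> l \<otimes> inv g \<in> L"
    using K.inv_op_closed2[OF g kl(1)] L.inv_op_closed2[OF g kl(2)] .
  ultimately show "g \<otimes> a \<otimes> inv g \<in> K <#> L"
    unfolding set_mult_def by blast
qed

lemma exists_maximal_normal_subgroup_below:
  assumes fin: "finite (carrier G)" and "D \<lhd> G" and "D \<noteq> {\<one>}"
  obtains L where "L \<lhd> G" and "L \<subset> D"
    and "\<forall>M. M \<lhd> G \<longrightarrow> L \<subseteq> M \<longrightarrow> M \<subset> D \<longrightarrow> M = L"
proof -
  define below where "below = {L. L \<lhd> G \<and> L \<subset> D}"
  have "below \<subseteq> Pow (carrier G)"
    using assms(2) normal_imp_subgroup subgroup.subset unfolding below_def by blast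
  then have "finite below"
    by (rule finite_subset) (simp add: fin)
  moreover have "{\<one>} \<subset> D"
    using subgroup.one_closed[OF normal_imp_subgroup[OF assms(2)]] assms(3) by blast
  then have "{\<one>} \<in> below"
    using one_is_normal unfolding below_def by blast
  ultimately obtain L where L: "L \<in> below" and maximal: "\<forall>M\<in>below. L \<subseteq> M \<longrightarrow> L = M"
    using finite_has_maximal[of below] by blast
  have "\<forall>M. M \<lhd> G \<longrightarrow> L \<subseteq> M \<longrightarrow> M \<subset> D \<longrightarrow> M = L"
    using maximal unfolding below_def by blast
  then show ?thesis
    using that L unfolding below_def by blast
qed

lemma set_mult_eq_if_maximal_normal:
  assumes "K \<lhd> G" "L \<lhd> G" "D \<lhd> G" and "K \<subseteq> D" "L \<subset> D" "\<not> K \<subseteq> L"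
    and maximal: "\<forall>M. M \<lhd> G \<longrightarrow> L \<subseteq> M \<longrightarrow> M \<subset> D \<longrightarrow> M = L"
  shows "K <#> L = D"
proof -
  interpret K: normal K G by fact
  interpret L: normal L G by fact
  interpret D: normal D G by fact
  have "K <#> L \<subseteq> D <#> D"
    using assms(4,5) by (intro mono_set_mult) auto
  then have "K <#> L \<subseteq> D"
    using subgroup_mult_id[OF D.subgroup_axioms] by simp
  moreover have "L \<subseteq> K <#> L"
    using mono_set_mult[of "{\<one>}" K L L G] K.one_closed lcos_mult_one[OF L.subset]
    by (simp add: l_coset_eq_set_mult)
  moreover have "K \<subseteq> K <#> L"
    using mono_set_mult[of K K "{\<one>}" L G] L.one_closed coset_mult_one[OF K.subset]
    by (simp add: r_coset_eq_set_mult)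
  moreover have "K <#> L \<noteq> L"
    using \<open>K \<subseteq> K <#> L\<close> assms(6) by blast
  ultimately show ?thesis
    using maximal normal_set_mult[OF assms(1,2)] by blast
qed

lemma magnus_property_minimal_normal_closure:
  assumes fin: "finite (carrier G)" and mp: "magnus_property G"
    and "D \<lhd> G" and "\<not> D \<subseteq> L"
  obtains x where "x \<in> D - L"
    and "\<forall>k\<in>normal_closure G x - L. conjugate G k x \<or> conjugate G k (inv x)"
proof -
  interpret D: normal D G by fact
  define closures where "closures = {normal_closure G y | y. y \<in> D - L}"
  have "closures \<subseteq> Pow (carrier G)"
    using normal_closure_minimal[OF \<open>D \<lhd> G\<close>] D.subset unfolding closures_def by blast
  then have "finite closures"
    by (rule finite_subset) (simp add: fin)
  moreover have "closures \<noteq> {}"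
    using assms(4) unfolding closures_def by blast
  ultimately obtain K where "K \<in> closures" and minimal: "\<forall>M\<in>closures. M \<subseteq> K \<longrightarrow> K = M"
    using finite_has_minimal[of closures] by blast
  then obtain x where x: "x \<in> D - L" and K: "K = normal_closure G x"
    unfolding closures_def by blast
  have xG: "x \<in> carrier G"
    using x D.subset by blast
  have "conjugate G k x \<or> conjugate G k (inv x)" if k: "k \<in> K - L" for k
  proof -
    have "k \<in> D"
      using k normal_closure_minimal[OF \<open>D \<lhd> G\<close>] x K by blast
    then have "normal_closure G k \<in> closures"
      using k unfolding closures_def by blast
    moreover have "normal_closure G k \<subseteq> K"
      using k normal_closure_minimal[OF normal_closure_normal[OF xG]] K by blast
    ultimately have "normal_closure G k = normal_closure G x"
      using minimal K by blast
    then show ?thesis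
      using mp \<open>k \<in> D\<close> xG D.subset unfolding magnus_property_def by blast
  qed
  then show ?thesis
    using that x K by blast
qed

end

lemma (in group_hom) hom_conjugate:
  assumes "conjugate G y x" and "x \<in> carrier G"
  shows "conjugate H (h y) (h x)"
proof -
  obtain g where g: "g \<in> carrier G" and y: "y = g \<otimes>\<^bsub>G\<^esub> x \<otimes>\<^bsub>G\<^esub> inv\<^bsub>G\<^esub> g"
    using assms(1) unfolding conjugate_def by blast
  then have "h y = h g \<otimes>\<^bsub>H\<^esub> h x \<otimes>\<^bsub>H\<^esub> inv\<^bsub>H\<^esub> h g"
    using assms(2) by simp
  then show ?thesis
    unfolding conjugate_def using hom_closed[OF g] by blast
qed

lemma (in group_hom) img_conjugate_cover:
  assumes "K \<subseteq> carrier G" and "K <#>\<^bsub>G\<^esub> kernel G H h = D" and x: "x \<in> carrier G"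
    and cover: "\<forall>k\<in>K - kernel G H h. conjugate G k x \<or> conjugate G k (inv\<^bsub>G\<^esub> x)"
  shows "\<forall>q\<in>h ` D. q \<noteq> \<one>\<^bsub>H\<^esub> \<longrightarrow> conjugate H q (h x) \<or> conjugate H q (inv\<^bsub>H\<^esub> h x)"
proof (intro ballI impI)
  fix q assume "q \<in> h ` D" and q: "q \<noteq> \<one>\<^bsub>H\<^esub>"
  then obtain k l where kl: "k \<in> K" "l \<in> kernel G H h" "q = h (k \<otimes>\<^bsub>G\<^esub> l)"
    using assms(2) unfolding set_mult_def by blast
  have "k \<in> carrier G" "l \<in> carrier G" "h l = \<one>\<^bsub>H\<^esub>"
    using kl(1,2) assms(1) unfolding kernel_def by auto
  then have q_eq: "q = h k"
    using kl(3) by simp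
  then have "k \<notin> kernel G H h"
    using q unfolding kernel_def by blast
  then have "conjugate G k x \<or> conjugate G k (inv\<^bsub>G\<^esub> x)"
    using cover kl(1) by blast
  then show "conjugate H q (h x) \<or> conjugate H q (inv\<^bsub>H\<^esub> h x)"
    using hom_conjugate x q_eq by fastforce
qed

lemma (in normal) kernel_r_coset_hom_Mod:
  "kernel G (G Mod H) (\<lambda>a. H #> a) = H"
  unfolding kernel_def using rcos_self[OF _ subgroup_axioms] rcos_const[OF is_group] subset
  by (auto simp: FactGroup_def)

lemma (in normal) perfect_subset_if_Mod_image_commute:
  assumes D: "D \<lhd> G" and perfect: "derived G D = D"
    and commute: "\<forall>a\<in>(\<lambda>a. H #> a) ` D. \<forall>b\<in>(\<lambda>a. H #> a) ` D. a \<otimes>\<^bsub>G Mod H\<^esub> b = b \<otimes>\<^bsub>G Mod H\<^esub> a"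
  shows "D \<subseteq> H"
proof
  interpret D: normal D G by fact
  interpret quotient: group_hom G "G Mod H" "\<lambda>a. H #> a"
    by (simp add: group_hom_def group_hom_axioms_def is_group factorgroup_is_group r_coset_hom_Mod)
  have "(\<lambda>a. H #> a) ` D \<lhd> G Mod H"
    using normal.surj_hom_normal_subgroup[OF D quotient.group_hom_axioms carrier_FactGroup[symmetric]] .
  then have "derived (G Mod H) ((\<lambda>a. H #> a) ` D) = {\<one>\<^bsub>G Mod H\<^esub>}"
    by (rule group.derived_eq_one_if_commute[OF factorgroup_is_group normal_imp_subgroup commute])
  then have image_trivial: "(\<lambda>a. H #> a) ` D = {H}"
    using quotient.derived_img[OF D.subset] perfect by simp
  fix d assume "d \<in> D"
  then have "d \<in> kernel G (G Mod H) (\<lambda>a. H #> a)"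
    using image_trivial D.subset unfolding kernel_def by auto
  then show "d \<in> H"
    by (simp add: kernel_r_coset_hom_Mod)
qed

lemma (in group) perfect_normal_subgroup_trivial_if_magnus_property:
  assumes fin: "finite (carrier G)" and mp: "magnus_property G"
    and D: "D \<lhd> G" and perfect: "derived G D = D"
  shows "D = {\<one>}"
proof (rule ccontr)
  assume "D \<noteq> {\<one>}"
  then obtain L where L: "L \<lhd> G" "L \<subset> D"
    and maximal: "\<forall>M. M \<lhd> G \<longrightarrow> L \<subseteq> M \<longrightarrow> M \<subset> D \<longrightarrow> M = L"
    using exists_maximal_normal_subgroup_below[OF fin D] by blast
  then obtain x where x: "x \<in> D - L"
    and cover: "\<forall>k\<in>normal_closure G x - L. conjugate G k x \<or> conjugate G k (inv x)"
    using magnus_property_minimal_normal_closure[OF fin mp D] by blast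
  interpret D: normal D G by fact
  interpret L: normal L G by fact
  interpret quotient: group_hom G "G Mod L" "\<lambda>a. L #> a"
    by (simp add: group_hom_def group_hom_axioms_def is_group L.factorgroup_is_group L.r_coset_hom_Mod)
  have xG: "x \<in> carrier G"
    using x D.subset by blast
  have closure_sub: "normal_closure G x \<subseteq> carrier G"
    using normal_closure_normal[OF xG] normal_imp_subgroup subgroup.subset by blast
  have "normal_closure G x <#> L = D"
    using x normal_closure_minimal[OF D] mem_normal_closure[OF xG]
    by (intro set_mult_eq_if_maximal_normal[OF normal_closure_normal[OF xG] L(1) D _ L(2) _ maximal]) auto
  then have cover_Mod: "\<forall>q\<in>(\<lambda>a. L #> a) ` D. q \<noteq> \<one>\<^bsub>G Mod L\<^esub> \<longrightarrow>
      conjugate (G Mod L) q (L #> x) \<or> conjugate (G Mod L) q (inv\<^bsub>G Mod L\<^esub> (L #> x))"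
    using quotient.img_conjugate_cover[OF closure_sub, unfolded L.kernel_r_coset_hom_Mod, OF _ xG cover]
    by simp
  have image_normal: "(\<lambda>a. L #> a) ` D \<lhd> G Mod L"
    using normal.surj_hom_normal_subgroup[OF D quotient.group_hom_axioms carrier_FactGroup[symmetric]] .
  have fin_Mod: "finite (carrier (G Mod L))"
    using fin by (simp add: carrier_FactGroup)
  have "L #> x \<in> (\<lambda>a. L #> a) ` D"
    using x by blast
  then have "\<forall>a\<in>(\<lambda>a. L #> a) ` D. \<forall>b\<in>(\<lambda>a. L #> a) ` D. a \<otimes>\<^bsub>G Mod L\<^esub> b = b \<otimes>\<^bsub>G Mod L\<^esub> a"
    by (rule group.commute_if_nontrivial_elements_conjugate[OF L.factorgroup_is_group fin_Mod image_normal _ cover_Mod])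
  then have "D \<subseteq> L"
    by (rule L.perfect_subset_if_Mod_image_commute[OF D perfect])
  then show False
    using L(2) by blast
qed

theorem proposition1p1:
  fixes G :: "('a, 'b) monoid_scheme"
  assumes "group G" and "finite (carrier G)" and "magnus_property G"
  shows "solvable G"
proof (rule ccontr)
  interpret group G by fact
  assume "\<not> solvable G"
  then obtain D where "D \<lhd> G" "derived G D = D" "D \<noteq> {\<one>\<^bsub>G\<^esub>}"
    using exists_perfect_normal_subgroup_if_not_solvable[OF assms(2)] by blast
  then show False
    using perfect_normal_subgroup_trivial_if_magnus_property[OF assms(2,3)] by blast
qed

end
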